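(* Let $X$ be a subshift of finite type, $Y$ a sofic shift, and $\pi : X \to Y$ a factor code which is right-closing and regular. Then there is a sliding block code $\rho : X \to X_{\mathbb K(Y)}$ such that $L_{\mathbb K(Y)}\circ\rho=\pi$.
   Context: A sliding block code $\pi:X\to Y$ is right-closing if whenever $x,x'\in X$ satisfy $\pi(x)=\pi(x')$ and $x_i=x'_i$ for all $i\le N$ for some $N\in\mathbb Z$, then $x=x'$. For $x\in X$ let $\mathbb U(x)=\{z\in X:\exists N\ \forall i\le N,\ z_i=x_i\}$; $x$ is regular for $\pi$ if $\pi$ maps $\mathbb U(x)$ onto $\mathbb U(\pi(x))$; $\mathcal R(\pi)$ is the set of such points, and $\pi$ is regular if $\mathcal R(\pi)$ is dense in $X$. For a sofic shift $Y\subseteq A^{\mathbb Z}$ and $y\in Y$, $F(y)=\{w\in Y[0,\infty): y_{(-\infty,-1]}w\in Y\}$, where $Y[0,\infty)=\{y_{[0,\infty)}:y\in Y\}$. The future cover $(\mathbb K(Y),L_{\mathbb K(Y)})$ is the labeled graph with vertices the distinct sets $F(y)$, $y\in Y$, and an edge labeled $a\in A$ from $F(y)$ to $F(z)$ exactly when $F(z)=\{w\in A^{\mathbb N}: aw\in F(y)\}$ (one edge per such pair and label); $X_{\mathbb K(Y)}$ is its edge shift and $L_{\mathbb K(Y)}:X_{\mathbb K(Y)}\to Y$ reads labels coordinatewise. *)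

theory Defs
  imports Main
begin

definition window :: "(int \<Rightarrow> 'a) \<Rightarrow> int \<Rightarrow> nat \<Rightarrow> 'a list" where
  "window x i n = map (\<lambda>j. x (i + int j)) [0..<n]"

text \<open>Shift of finite type: described by a (finite) list of allowed blocks of some
  length N (equivalently, a finite list of forbidden blocks).\<close>
definition is_sft :: "(int \<Rightarrow> 'a::finite) set \<Rightarrow> bool" where
  "is_sft X \<longleftrightarrow> (\<exists>N (P :: 'a list set). X = {x. \<forall>i. window x i N \<in> P})"

text \<open>Labeled graphs: edges are triples (source, label, target).\<close>
definition path_shift :: "('v \<times> 'a \<times> 'v) set \<Rightarrow> (int \<Rightarrow> 'v \<times> 'a \<times> 'v) set" where
  "path_shift E = {e. \<forall>i. e i \<in> E \<and> snd (snd (e i)) = fst (e (i + 1))}"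

definition label_map :: "(int \<Rightarrow> 'v \<times> 'a \<times> 'v) \<Rightarrow> (int \<Rightarrow> 'a)" where
  "label_map e = (\<lambda>i. fst (snd (e i)))"

definition is_sofic :: "(int \<Rightarrow> 'a::finite) set \<Rightarrow> bool" where
  "is_sofic Y \<longleftrightarrow> (\<exists>E :: (nat \<times> 'a \<times> nat) set. finite E \<and> Y = label_map ` path_shift E)"

definition sliding_block_code ::
  "(int \<Rightarrow> 'a) set \<Rightarrow> (int \<Rightarrow> 'b) set \<Rightarrow> ((int \<Rightarrow> 'a) \<Rightarrow> (int \<Rightarrow> 'b)) \<Rightarrow> bool" where
  "sliding_block_code X Y \<pi> \<longleftrightarrow> (\<forall>x\<in>X. \<pi> x \<in> Y) \<and>
     (\<exists>(M::nat) (\<Phi> :: 'a list \<Rightarrow> 'b). \<forall>x\<in>X. \<forall>i. \<pi> x i = \<Phi> (window x (i - int M) (2 * M + 1)))"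

definition factor_code ::
  "(int \<Rightarrow> 'a) set \<Rightarrow> (int \<Rightarrow> 'b) set \<Rightarrow> ((int \<Rightarrow> 'a) \<Rightarrow> (int \<Rightarrow> 'b)) \<Rightarrow> bool" where
  "factor_code X Y \<pi> \<longleftrightarrow> sliding_block_code X Y \<pi> \<and> \<pi> ` X = Y"

definition right_closing :: "(int \<Rightarrow> 'a) set \<Rightarrow> ((int \<Rightarrow> 'a) \<Rightarrow> (int \<Rightarrow> 'b)) \<Rightarrow> bool" where
  "right_closing X \<pi> \<longleftrightarrow> (\<forall>x\<in>X. \<forall>x'\<in>X. \<pi> x = \<pi> x' \<and> (\<exists>N. \<forall>i\<le>N. x i = x' i) \<longrightarrow> x = x')"

definition U_set :: "(int \<Rightarrow> 'a) set \<Rightarrow> (int \<Rightarrow> 'a) \<Rightarrow> (int \<Rightarrow> 'a) set" where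
  "U_set X x = {z\<in>X. \<exists>N. \<forall>i\<le>N. z i = x i}"

definition regular_points ::
  "(int \<Rightarrow> 'a) set \<Rightarrow> (int \<Rightarrow> 'b) set \<Rightarrow> ((int \<Rightarrow> 'a) \<Rightarrow> (int \<Rightarrow> 'b)) \<Rightarrow> (int \<Rightarrow> 'a) set" where
  "regular_points X Y \<pi> = {x\<in>X. \<pi> ` U_set X x = U_set Y (\<pi> x)}"

text \<open>Density in the product topology: every central block of every point is matched.\<close>
definition dense_in :: "(int \<Rightarrow> 'a) set \<Rightarrow> (int \<Rightarrow> 'a) set \<Rightarrow> bool" where
  "dense_in R X \<longleftrightarrow> (\<forall>x\<in>X. \<forall>n::nat. \<exists>z\<in>R. \<forall>i. \<bar>i\<bar> \<le> int n \<longrightarrow> z i = x i)"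

definition regular_code ::
  "(int \<Rightarrow> 'a) set \<Rightarrow> (int \<Rightarrow> 'b) set \<Rightarrow> ((int \<Rightarrow> 'a) \<Rightarrow> (int \<Rightarrow> 'b)) \<Rightarrow> bool" where
  "regular_code X Y \<pi> \<longleftrightarrow> dense_in (regular_points X Y \<pi>) X"

definition right_rays :: "(int \<Rightarrow> 'a) set \<Rightarrow> (nat \<Rightarrow> 'a) set" where
  "right_rays Y = {w. \<exists>y\<in>Y. w = (\<lambda>n. y (int n))}"

definition future_set :: "(int \<Rightarrow> 'a) set \<Rightarrow> (int \<Rightarrow> 'a) \<Rightarrow> (nat \<Rightarrow> 'a) set" where
  "future_set Y y = {w\<in>right_rays Y. (\<lambda>i. if i < 0 then y i else w (nat i)) \<in> Y}"

definition cons_seq :: "'a \<Rightarrow> (nat \<Rightarrow> 'a) \<Rightarrow> (nat \<Rightarrow> 'a)" where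
  "cons_seq a w = (\<lambda>n. if n = 0 then a else w (n - 1))"

definition future_cover_edges ::
  "(int \<Rightarrow> 'a) set \<Rightarrow> ((nat \<Rightarrow> 'a) set \<times> 'a \<times> (nat \<Rightarrow> 'a) set) set" where
  "future_cover_edges Y = {(future_set Y y, a, future_set Y z) | y a z.
      y \<in> Y \<and> z \<in> Y \<and> future_set Y z = {w. cons_seq a w \<in> future_set Y y}}"

abbreviation future_cover_shift ::
  "(int \<Rightarrow> 'a) set \<Rightarrow> (int \<Rightarrow> (nat \<Rightarrow> 'a) set \<times> 'a \<times> (nat \<Rightarrow> 'a) set) set" where
  "future_cover_shift Y \<equiv> path_shift (future_cover_edges Y)"

end

theory Submission
  imports Defs "HOL-Library.Infinite_Set"
begin

text \<open>
  By compactness, a right-closing code on a shift of finite type has a delay \<open>D\<close>: two points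
  with the same left tail whose images agree up to coordinate \<open>D\<close> already agree at \<open>0\<close>.
  If \<open>a\<close> is regular, every future \<open>w\<close> of \<open>\<pi> a\<close> is the image of a point \<open>z\<close> left asymptotic
  to \<open>a\<close>, and by the delay \<open>z\<close> equals \<open>a\<close> left of \<open>-D\<close>. Gluing in the shift of finite type
  transplants \<open>z\<close> onto any \<open>b\<close> agreeing with \<open>a\<close> on a fixed central block, so \<open>w\<close> is a
  future of \<open>\<pi> b\<close> as well. Hence on the dense set of regular points the edge
  \<open>(F(\<pi> r), (\<pi> r)\<^sub>0, F(\<sigma>(\<pi> r)))\<close> of the future cover (\<open>\<sigma>\<close> the shift) is a block
  function of \<open>r\<close>, and evaluating it at regular points approximating \<open>\<sigma>\<^sup>i x\<close> defines
  \<open>\<rho>(x)\<^sub>i\<close>.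
\<close>

definition shift_seq :: "int \<Rightarrow> (int \<Rightarrow> 'a) \<Rightarrow> int \<Rightarrow> 'a" where
  "shift_seq k x = (\<lambda>i. x (i + k))"

lemma shift_seq_apply [simp]: "shift_seq k x i = x (i + k)"
  by (simp add: shift_seq_def)

lemma shift_seq_shift_seq [simp]: "shift_seq k (shift_seq l x) = shift_seq (k + l) x"
  by (simp add: shift_seq_def ac_simps)

lemma shift_seq_0 [simp]: "shift_seq 0 x = x"
  by (simp add: shift_seq_def)

definition shift_invariant :: "(int \<Rightarrow> 'a) set \<Rightarrow> bool" where
  "shift_invariant S \<longleftrightarrow> (\<forall>x\<in>S. \<forall>k. shift_seq k x \<in> S)"

lemma shift_invariant_mem_iff:
  assumes "shift_invariant S"
  shows "shift_seq k x \<in> S \<longleftrightarrow> x \<in> S"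
  using assms shift_seq_shift_seq[of "- k" k x] unfolding shift_invariant_def
  by (metis add.left_inverse shift_seq_0)

definition agree_within :: "nat \<Rightarrow> (int \<Rightarrow> 'a) \<Rightarrow> (int \<Rightarrow> 'a) \<Rightarrow> bool" where
  "agree_within R x y \<longleftrightarrow> (\<forall>i. \<bar>i\<bar> \<le> int R \<longrightarrow> x i = y i)"

lemma agree_within_sym: "agree_within R x y \<longleftrightarrow> agree_within R y x"
  by (auto simp: agree_within_def)

lemma window_cong:
  assumes "\<And>j. i \<le> j \<Longrightarrow> j < i + int n \<Longrightarrow> x j = y j"
  shows "window x i n = window y i n"
  unfolding window_def using assms by (auto intro!: map_cong)

lemma window_eqD:
  assumes "window x i n = window y i n" "i \<le> j" "j < i + int n"
  shows "x j = y j"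
proof -
  have "\<forall>k\<in>set [0..<n]. x (i + int k) = y (i + int k)"
    using assms(1) unfolding window_def map_eq_conv by simp
  moreover have "nat (j - i) \<in> set [0..<n]"
    using assms(2,3) by auto
  ultimately show ?thesis
    using assms(2) by force
qed

lemma window_shift_seq: "window (shift_seq k x) i n = window x (i + k) n"
  unfolding window_def by (simp add: algebra_simps)

lemma agree_within_iff_window:
  "agree_within R x y \<longleftrightarrow> window x (- int R) (2 * R + 1) = window y (- int R) (2 * R + 1)"
proof
  assume "agree_within R x y"
  then show "window x (- int R) (2 * R + 1) = window y (- int R) (2 * R + 1)"
    unfolding agree_within_def by (intro window_cong) auto
next
  assume "window x (- int R) (2 * R + 1) = window y (- int R) (2 * R + 1)"
  from window_eqD[OF this] show "agree_within R x y"
    unfolding agree_within_def by auto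
qed

lemma finite_windows: "finite (range (\<lambda>x :: int \<Rightarrow> 'c::finite. window x i n))"
proof (rule finite_subset)
  show "range (\<lambda>x. window x i n) \<subseteq> {xs. set xs \<subseteq> UNIV \<and> length xs = n}"
    by (auto simp: window_def)
  show "finite {xs. set xs \<subseteq> (UNIV :: 'c set) \<and> length xs = n}"
    by (rule finite_lists_length_eq) simp
qed

lemma pigeonhole_agree_within:
  fixes s :: "nat \<Rightarrow> int \<Rightarrow> 'c::finite"
  assumes "infinite K"
  shows "\<exists>p. infinite {k\<in>K. agree_within R (s k) p}"
proof -
  let ?w = "\<lambda>k. window (s k) (- int R) (2 * R + 1)"
  have "finite (?w ` K)"
    by (rule finite_subset[OF _ finite_windows]) auto
  then obtain k0 where "infinite {k\<in>K. ?w k = ?w k0}"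
    using pigeonhole_infinite[OF assms] by blast
  then show ?thesis
    by (intro exI[of _ "s k0"]) (simp add: agree_within_iff_window)
qed

lemma infinite_agree_within_refine:
  fixes s :: "nat \<Rightarrow> int \<Rightarrow> 'c::finite"
  assumes "infinite {k. agree_within R (s k) p}"
  shows "\<exists>p'. infinite {k. agree_within (Suc R) (s k) p'} \<and> agree_within R p' p"
proof -
  obtain p' where p': "infinite {k\<in>{k. agree_within R (s k) p}. agree_within (Suc R) (s k) p'}"
    using pigeonhole_agree_within[OF assms] by blast
  then obtain k where "agree_within R (s k) p" "agree_within (Suc R) (s k) p'"
    using not_finite_existsD by blast
  then have "agree_within R p' p"
    by (auto simp: agree_within_def)
  moreover have "infinite {k. agree_within (Suc R) (s k) p'}"
    using p' by (rule infinite_super[rotated]) auto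
  ultimately show ?thesis
    by blast
qed

lemma finite_alphabet_cluster_point:
  fixes s :: "nat \<Rightarrow> int \<Rightarrow> 'c::finite"
  shows "\<exists>l. \<forall>R. infinite {k. agree_within R (s k) l}"
proof -
  have "\<exists>p. \<forall>R. infinite {k. agree_within R (s k) (p R)} \<and> agree_within R (p (Suc R)) (p R)"
  proof (rule dependent_nat_choice)
    show "\<exists>p. infinite {k. agree_within 0 (s k) p}"
      using pigeonhole_agree_within[of UNIV] by simp
  qed (rule infinite_agree_within_refine)
  then obtain p where p: "\<And>R. infinite {k. agree_within R (s k) (p R)}"
    and p_Suc: "\<And>R. agree_within R (p (Suc R)) (p R)"
    by blast
  have coherent: "agree_within R (p R') (p R)" if "R \<le> R'" for R R'
    using that
  proof (induction R' rule: dec_induct)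
    case (step R')
    then show ?case
      using p_Suc[of R'] by (auto simp: agree_within_def)
  qed (simp add: agree_within_def)
  define l where "l i = p (nat \<bar>i\<bar>) i" for i
  have "infinite {k. agree_within R (s k) l}" for R
  proof -
    have "agree_within R (p R) l"
      using coherent by (auto simp: agree_within_def l_def)
    then have "{k. agree_within R (s k) (p R)} \<subseteq> {k. agree_within R (s k) l}"
      by (auto simp: agree_within_def)
    then show ?thesis
      using p infinite_super by blast
  qed
  then show ?thesis
    by blast
qed

lemma finite_alphabet_joint_cluster_point:
  fixes A :: "nat \<Rightarrow> int \<Rightarrow> 'c::finite" and B :: "nat \<Rightarrow> int \<Rightarrow> 'd::finite"
  shows "\<exists>a b. \<forall>R k0. \<exists>k\<ge>k0. agree_within R (A k) a \<and> agree_within R (B k) b"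
proof -
  obtain l where l: "\<And>R. infinite {k. agree_within R (\<lambda>i. (A k i, B k i)) l}"
    using finite_alphabet_cluster_point[of "\<lambda>k i. (A k i, B k i)"] by blast
  have "\<exists>k\<ge>k0. agree_within R (A k) (fst \<circ> l) \<and> agree_within R (B k) (snd \<circ> l)" for R k0
  proof -
    obtain k where "k \<ge> k0" "agree_within R (\<lambda>i. (A k i, B k i)) l"
      using l[of R] unfolding infinite_nat_iff_unbounded_le by blast
    then show ?thesis
      unfolding agree_within_def comp_def by (metis fst_conv snd_conv)
  qed
  then show ?thesis
    by blast
qed

lemma U_set_shift_seq:
  assumes "shift_invariant S"
  shows "U_set S (shift_seq k x) = shift_seq k ` U_set S x"
proof
  show "shift_seq k ` U_set S x \<subseteq> U_set S (shift_seq k x)"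
  proof
    fix z'
    assume "z' \<in> shift_seq k ` U_set S x"
    then obtain z n where "z' = shift_seq k z" "z \<in> S" "\<forall>i\<le>n. z i = x i"
      unfolding U_set_def by blast
    then show "z' \<in> U_set S (shift_seq k x)"
      using assms by (auto simp: U_set_def shift_invariant_mem_iff intro!: exI[of _ "n - k"])
  qed
  show "U_set S (shift_seq k x) \<subseteq> shift_seq k ` U_set S x"
  proof
    fix z'
    assume "z' \<in> U_set S (shift_seq k x)"
    then obtain n where "z' \<in> S" "\<forall>i\<le>n. z' i = x (i + k)"
      by (auto simp: U_set_def)
    then have "shift_seq (- k) z' \<in> U_set S x"
      using assms by (auto simp: U_set_def shift_invariant_mem_iff intro!: exI[of _ "n + k"])
    moreover have "z' = shift_seq k (shift_seq (- k) z')"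
      by simp
    ultimately show "z' \<in> shift_seq k ` U_set S x"
      by blast
  qed
qed

text \<open>\<open>join_at_zero y w\<close> is the sequence \<open>y\<^sub>(\<^sub>-\<^sub>\<infinity>\<^sub>,\<^sub>-\<^sub>1\<^sub>] w\<close> in the definition of \<open>F(y)\<close>.\<close>

definition join_at_zero :: "(int \<Rightarrow> 'a) \<Rightarrow> (nat \<Rightarrow> 'a) \<Rightarrow> int \<Rightarrow> 'a" where
  "join_at_zero y w = (\<lambda>i. if i < 0 then y i else w (nat i))"

lemma future_set_eq: "future_set Y y = {w. join_at_zero y w \<in> Y}"
  unfolding future_set_def right_rays_def join_at_zero_def by force

lemma shift_seq_join_at_zero_cons:
  "shift_seq 1 (join_at_zero y (cons_seq (y 0) w)) = join_at_zero (shift_seq 1 y) w"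
proof
  fix i :: int
  show "shift_seq 1 (join_at_zero y (cons_seq (y 0) w)) i = join_at_zero (shift_seq 1 y) w i"
    by (cases "i < -1"; cases "i = -1") (auto simp: join_at_zero_def cons_seq_def nat_add_distrib)
qed

definition future_edge :: "(int \<Rightarrow> 'a) set \<Rightarrow> (int \<Rightarrow> 'a) \<Rightarrow> (nat \<Rightarrow> 'a) set \<times> 'a \<times> (nat \<Rightarrow> 'a) set"
  where "future_edge Y y = (future_set Y y, y 0, future_set Y (shift_seq 1 y))"

lemma future_edge_in_future_cover_edges:
  assumes "shift_invariant Y" "y \<in> Y"
  shows "future_edge Y y \<in> future_cover_edges Y"
proof -
  have "future_set Y (shift_seq 1 y) = {w. cons_seq (y 0) w \<in> future_set Y y}"
    using shift_invariant_mem_iff[OF assms(1), of 1]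
    by (simp add: future_set_eq shift_seq_join_at_zero_cons[symmetric])
  moreover have "shift_seq 1 y \<in> Y"
    using assms by (simp add: shift_invariant_mem_iff)
  ultimately show ?thesis
    using assms(2) unfolding future_edge_def future_cover_edges_def by blast
qed

lemma regular_point_lifts_future:
  assumes "a \<in> regular_points X Y \<pi>" "w \<in> future_set Y (\<pi> a)"
  shows "\<exists>z\<in>U_set X a. \<pi> z = join_at_zero (\<pi> a) w"
proof -
  have "join_at_zero (\<pi> a) w \<in> U_set Y (\<pi> a)"
    using assms(2) unfolding future_set_eq U_set_def
    by (intro CollectI conjI exI[of _ "-1"]) (auto simp: join_at_zero_def)
  then show ?thesis
    using assms(1) unfolding regular_points_def by (metis (mono_tags, lifting) imageE mem_Collect_eq)
qed

definition right_closing_with_delay ::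
  "(int \<Rightarrow> 'b) set \<Rightarrow> ((int \<Rightarrow> 'b) \<Rightarrow> int \<Rightarrow> 'a) \<Rightarrow> nat \<Rightarrow> bool" where
  "right_closing_with_delay X \<pi> D \<longleftrightarrow>
     (\<forall>x\<in>X. \<forall>x'\<in>X. (\<forall>i<0. x i = x' i) \<and> (\<forall>i\<le>int D. \<pi> x i = \<pi> x' i) \<longrightarrow> x 0 = x' 0)"

lemma block_function_of_locally_determined:
  assumes "\<And>r r'. r \<in> R \<Longrightarrow> r' \<in> R \<Longrightarrow> agree_within T r r' \<Longrightarrow> f r = f r'"
  shows "\<exists>\<Psi>. \<forall>r\<in>R. \<forall>x. agree_within T r x \<longrightarrow> \<Psi> (window x (- int T) (2 * T + 1)) = f r"
proof -
  define pick where "pick u = (SOME r'. r' \<in> R \<and> window r' (- int T) (2 * T + 1) = u)" for u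
  have "f (pick (window x (- int T) (2 * T + 1))) = f r" if r: "r \<in> R" "agree_within T r x" for r x
  proof -
    let ?u = "window x (- int T) (2 * T + 1)"
    have "\<exists>r'. r' \<in> R \<and> window r' (- int T) (2 * T + 1) = ?u"
      using r by (auto simp: agree_within_iff_window)
    then have pick: "pick ?u \<in> R \<and> window (pick ?u) (- int T) (2 * T + 1) = ?u"
      unfolding pick_def by (rule someI_ex)
    moreover have "window r (- int T) (2 * T + 1) = ?u"
      using r(2) by (simp add: agree_within_iff_window)
    ultimately have "agree_within T (pick ?u) r"
      by (simp add: agree_within_iff_window)
    then show ?thesis
      using assms r(1) pick by blast
  qed
  then show ?thesis
    by (intro exI[of _ "\<lambda>u. f (pick u)"]) blast
qed

locale sft_block_code =
  fixes X :: "(int \<Rightarrow> 'b::finite) set" and N :: nat and P :: "'b list set"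
    and \<pi> :: "(int \<Rightarrow> 'b) \<Rightarrow> int \<Rightarrow> 'a" and M :: nat and \<Phi> :: "'b list \<Rightarrow> 'a"
  assumes X_eq: "X = {x. \<forall>i. window x i N \<in> P}"
    and \<pi>_eq: "\<forall>x\<in>X. \<forall>i. \<pi> x i = \<Phi> (window x (i - int M) (2 * M + 1))"
begin

abbreviation Y :: "(int \<Rightarrow> 'a) set" where
  "Y \<equiv> \<pi> ` X"

abbreviation Reg :: "(int \<Rightarrow> 'b) set" where
  "Reg \<equiv> regular_points X Y \<pi>"

lemma Reg_subset: "r \<in> Reg \<Longrightarrow> r \<in> X"
  by (simp add: regular_points_def)

lemma shift_invariant_X: "shift_invariant X"
  using X_eq by (simp add: shift_invariant_def window_shift_seq)

lemma mem_X_if_approximated: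
  assumes "\<And>R. \<exists>x\<in>X. agree_within R x l"
  shows "l \<in> X"
proof -
  have "window l i N \<in> P" for i
  proof -
    obtain x where "x \<in> X" "agree_within (nat \<bar>i\<bar> + N) x l"
      using assms by blast
    then have "window l i N = window x i N"
      by (auto simp: agree_within_def intro!: window_cong)
    then show ?thesis
      using \<open>x \<in> X\<close> X_eq by auto
  qed
  then show ?thesis
    using X_eq by auto
qed

lemma glue_in_X:
  assumes "x \<in> X" "z \<in> X" "\<And>j. c - int N \<le> j \<Longrightarrow> j < c \<Longrightarrow> x j = z j"
  shows "(\<lambda>i. if i < c then x i else z i) \<in> X"
proof -
  have "window (\<lambda>i. if i < c then x i else z i) i N \<in> P" for i
  proof (cases "i < c - int N")
    case True
    then have "window (\<lambda>i. if i < c then x i else z i) i N = window x i N"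
      by (intro window_cong) auto
    then show ?thesis
      using assms(1) X_eq by auto
  next
    case False
    then have "window (\<lambda>i. if i < c then x i else z i) i N = window z i N"
      by (intro window_cong) (use assms(3) in auto)
    then show ?thesis
      using assms(2) X_eq by auto
  qed
  then show ?thesis
    using X_eq by auto
qed

lemma \<pi>_local:
  assumes "x \<in> X" "x' \<in> X" "\<And>j. \<bar>j - i\<bar> \<le> int M \<Longrightarrow> x j = x' j"
  shows "\<pi> x i = \<pi> x' i"
proof -
  have "window x (i - int M) (2 * M + 1) = window x' (i - int M) (2 * M + 1)"
    by (rule window_cong) (use assms(3) in auto)
  then show ?thesis
    using \<pi>_eq assms(1,2) by metis
qed

lemma \<pi>_shift_seq: "x \<in> X \<Longrightarrow> \<pi> (shift_seq k x) = shift_seq k (\<pi> x)"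
  using \<pi>_eq shift_invariant_X by (auto simp: shift_invariant_def window_shift_seq algebra_simps)

lemma shift_invariant_Y: "shift_invariant Y"
  unfolding shift_invariant_def using shift_invariant_X
  by (auto simp: shift_invariant_def \<pi>_shift_seq[symmetric])

lemma shift_seq_regular_point:
  assumes "x \<in> Reg"
  shows "shift_seq k x \<in> Reg"
proof -
  have x: "x \<in> X" "\<pi> ` U_set X x = U_set Y (\<pi> x)"
    using assms by (auto simp: regular_points_def)
  have "\<pi> ` U_set X (shift_seq k x) = shift_seq k ` \<pi> ` U_set X x"
    unfolding U_set_shift_seq[OF shift_invariant_X] image_image
    by (rule image_cong) (auto simp: U_set_def \<pi>_shift_seq)
  also have "\<dots> = U_set Y (\<pi> (shift_seq k x))"
    using x by (simp add: U_set_shift_seq[OF shift_invariant_Y] \<pi>_shift_seq)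
  finally show ?thesis
    using x(1) shift_invariant_X by (simp add: regular_points_def shift_invariant_mem_iff)
qed

lemma right_closing_has_delay:
  assumes "right_closing X \<pi>"
  shows "\<exists>D. right_closing_with_delay X \<pi> D"
proof (rule ccontr)
  assume "\<nexists>D. right_closing_with_delay X \<pi> D"
  then obtain A B where AB: "\<And>D. A D \<in> X" "\<And>D. B D \<in> X" "\<And>D i. i < 0 \<Longrightarrow> A D i = B D i"
    "\<And>D i. i \<le> int D \<Longrightarrow> \<pi> (A D) i = \<pi> (B D) i" "\<And>D. A D 0 \<noteq> B D 0"
    unfolding right_closing_with_delay_def by metis
  obtain a b where near: "\<And>R k0. \<exists>k\<ge>k0. agree_within R (A k) a \<and> agree_within R (B k) b"
    using finite_alphabet_joint_cluster_point[of A B] by blast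
  have aX: "a \<in> X" and bX: "b \<in> X"
    using near AB(1,2) by (metis mem_X_if_approximated)+
  have "a i = b i" if "i \<le> -1" for i
  proof -
    obtain k where "agree_within (nat \<bar>i\<bar>) (A k) a" "agree_within (nat \<bar>i\<bar>) (B k) b"
      using near by blast
    then show ?thesis
      using AB(3)[of i k] that by (auto simp: agree_within_def)
  qed
  moreover have "\<pi> a = \<pi> b"
  proof
    fix i
    obtain k where k: "k \<ge> nat \<bar>i\<bar>"
      "agree_within (nat \<bar>i\<bar> + M) (A k) a" "agree_within (nat \<bar>i\<bar> + M) (B k) b"
      using near by blast
    have "\<pi> a i = \<pi> (A k) i"
      using k(2) by (intro \<pi>_local[OF aX AB(1)]) (auto simp: agree_within_def)
    also have "\<dots> = \<pi> (B k) i"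
      using k(1) by (intro AB(4)) auto
    also have "\<dots> = \<pi> b i"
      using k(3) by (intro \<pi>_local[OF AB(2) bX]) (auto simp: agree_within_def)
    finally show "\<pi> a i = \<pi> b i" .
  qed
  ultimately have "a = b"
    using assms aX bX unfolding right_closing_def by blast
  moreover obtain k where "agree_within 0 (A k) a" "agree_within 0 (B k) b"
    using near by blast
  then have "a 0 \<noteq> b 0"
    using AB(5)[of k] by (auto simp: agree_within_def)
  ultimately show False
    by simp
qed

lemma agree_before_delay:
  assumes "right_closing_with_delay X \<pi> D" "z \<in> X" "x \<in> X"
    and "\<forall>i\<le>n. z i = x i" "\<forall>i<0. \<pi> z i = \<pi> x i"
    and "i < - int D"
  shows "z i = x i"
  using assms(6)
proof (induction "nat (i - n)" arbitrary: i rule: less_induct)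
  case less
  show ?case
  proof (cases "i \<le> n")
    case True
    then show ?thesis
      using assms(4) by simp
  next
    case False
    have "z j = x j" if "j < i" for j
      using less.hyps[of j] that less.prems False assms(4) by (cases "j \<le> n") auto
    then have "\<forall>j<0. shift_seq i z j = shift_seq i x j"
      by simp
    moreover have "\<forall>j\<le>int D. \<pi> (shift_seq i z) j = \<pi> (shift_seq i x) j"
      using assms(2,3,5) less.prems by (simp add: \<pi>_shift_seq)
    ultimately have "shift_seq i z 0 = shift_seq i x 0"
      using assms(1-3) shift_invariant_X
      unfolding right_closing_with_delay_def shift_invariant_def by blast
    then show ?thesis
      by simp
  qed
qed

lemma glue_transfers_past:
  assumes zX: "z \<in> X" and aX: "a \<in> X" and bX: "b \<in> X"
    and za: "\<And>i. i < - int D \<Longrightarrow> z i = a i" and \<pi>za: "\<forall>i<0. \<pi> z i = \<pi> a i"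
    and ab: "agree_within (D + 2 * M + N) a b"
  shows "\<exists>z'\<in>X. (\<forall>i<0. \<pi> z' i = \<pi> b i) \<and> (\<forall>i\<ge>0. \<pi> z' i = \<pi> z i)"
proof -
  let ?K = "int (D + 2 * M + N)"
  have ab': "a i = b i" if "\<bar>i\<bar> \<le> ?K" for i
    using ab that by (simp add: agree_within_def)
  define z' where "z' i = (if i < - int D then b i else z i)" for i
  have z'X: "z' \<in> X"
    unfolding z'_def by (rule glue_in_X[OF bX zX]) (simp add: za ab')
  have z'_left: "z' i = b i" if "i < - int D" for i
    using that by (simp add: z'_def)
  have z'_right: "z' i = z i" if "- ?K \<le> i" for i
    using that za ab' by (simp add: z'_def)
  have "\<pi> z' i = \<pi> b i" if "i < 0" for i
  proof (cases "i < - int D - int M")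
    case True
    then show ?thesis
      by (intro \<pi>_local[OF z'X bX] z'_left) auto
  next
    case False
    then have "\<pi> z' i = \<pi> z i"
      by (intro \<pi>_local[OF z'X zX] z'_right) auto
    also have "\<dots> = \<pi> a i"
      using \<pi>za that by simp
    also have "\<dots> = \<pi> b i"
      using False that by (intro \<pi>_local[OF aX bX] ab') auto
    finally show ?thesis .
  qed
  moreover have "\<pi> z' i = \<pi> z i" if "0 \<le> i" for i
    using that by (intro \<pi>_local[OF z'X zX] z'_right) auto
  ultimately show ?thesis
    using z'X by blast
qed

lemma future_set_subset_if_agree_with_regular:
  assumes delay: "right_closing_with_delay X \<pi> D" and a: "a \<in> Reg" and bX: "b \<in> X"
    and ab: "agree_within (D + 2 * M + N) a b"
  shows "future_set Y (\<pi> a) \<subseteq> future_set Y (\<pi> b)"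
proof
  fix w
  assume "w \<in> future_set Y (\<pi> a)"
  then obtain z where "z \<in> U_set X a" and \<pi>z: "\<pi> z = join_at_zero (\<pi> a) w"
    using regular_point_lifts_future a by blast
  then obtain n where zX: "z \<in> X" and "\<forall>i\<le>n. z i = a i"
    by (auto simp: U_set_def)
  moreover have aX: "a \<in> X"
    using a by (rule Reg_subset)
  moreover have \<pi>za: "\<forall>i<0. \<pi> z i = \<pi> a i"
    using \<pi>z by (simp add: join_at_zero_def)
  ultimately have "\<And>i. i < - int D \<Longrightarrow> z i = a i"
    using agree_before_delay[OF delay] by blast
  then obtain z' where "z' \<in> X" "\<forall>i<0. \<pi> z' i = \<pi> b i" "\<forall>i\<ge>0. \<pi> z' i = \<pi> z i"
    using glue_transfers_past[OF zX aX bX _ \<pi>za ab] by blast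
  then have "\<pi> z' = join_at_zero (\<pi> b) w"
    using \<pi>z by (intro ext) (simp add: join_at_zero_def)
  then show "w \<in> future_set Y (\<pi> b)"
    using \<open>z' \<in> X\<close> unfolding future_set_eq by (metis image_eqI mem_Collect_eq)
qed

lemma future_set_locally_determined:
  assumes "right_closing X \<pi>"
  obtains K where
    "\<And>a b. a \<in> Reg \<Longrightarrow> b \<in> Reg \<Longrightarrow> agree_within K a b \<Longrightarrow> future_set Y (\<pi> a) = future_set Y (\<pi> b)"
proof -
  obtain D where D: "right_closing_with_delay X \<pi> D"
    using right_closing_has_delay assms by blast
  have "future_set Y (\<pi> a) = future_set Y (\<pi> b)"
    if "a \<in> Reg" "b \<in> Reg" "agree_within (D + 2 * M + N) a b" for a b
    using future_set_subset_if_agree_with_regular[OF D] that Reg_subset agree_within_sym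
    by (metis subset_antisym)
  then show thesis
    by (rule that)
qed

lemma regular_point_near_shift:
  assumes "regular_code X Y \<pi>" "x \<in> X"
  obtains r where "r \<in> Reg" "agree_within T r (shift_seq i x)"
  using assms shift_invariant_X
  unfolding regular_code_def dense_in_def shift_invariant_def agree_within_def by blast

lemma future_edge_block_function:
  assumes "right_closing X \<pi>"
  obtains T \<Psi> where "M < T"
    and "\<And>a b. a \<in> Reg \<Longrightarrow> b \<in> Reg \<Longrightarrow> agree_within (T - 1) a b \<Longrightarrow>
      future_set Y (\<pi> a) = future_set Y (\<pi> b)"
    and "\<forall>r\<in>Reg. \<forall>x. agree_within T r x \<longrightarrow>
      \<Psi> (window x (- int T) (2 * T + 1)) = future_edge Y (\<pi> r)"
proof -
  obtain K where K: "\<And>a b. a \<in> Reg \<Longrightarrow> b \<in> Reg \<Longrightarrow> agree_within K a b \<Longrightarrow>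
      future_set Y (\<pi> a) = future_set Y (\<pi> b)"
    using future_set_locally_determined assms by blast
  define T where "T = K + M + 1"
  have F_local: "future_set Y (\<pi> a) = future_set Y (\<pi> b)"
    if "a \<in> Reg" "b \<in> Reg" "agree_within (T - 1) a b" for a b
    using K[OF that(1,2)] that(3) by (auto simp: agree_within_def T_def)
  have "future_edge Y (\<pi> r) = future_edge Y (\<pi> r')"
    if r: "r \<in> Reg" "r' \<in> Reg" "agree_within T r r'" for r r'
  proof -
    have "agree_within (T - 1) r r'" "agree_within (T - 1) (shift_seq 1 r) (shift_seq 1 r')"
      using r(3) by (auto simp: agree_within_def T_def)
    then have "future_set Y (\<pi> r) = future_set Y (\<pi> r')"
      "future_set Y (\<pi> (shift_seq 1 r)) = future_set Y (\<pi> (shift_seq 1 r'))"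
      using r(1,2) F_local shift_seq_regular_point by blast+
    moreover have "\<pi> r 0 = \<pi> r' 0"
      using r by (intro \<pi>_local Reg_subset) (auto simp: agree_within_def T_def)
    ultimately show ?thesis
      using r(1,2) Reg_subset by (simp add: future_edge_def \<pi>_shift_seq)
  qed
  then have "\<exists>\<Psi>. \<forall>r\<in>Reg. \<forall>x. agree_within T r x \<longrightarrow>
      \<Psi> (window x (- int T) (2 * T + 1)) = future_edge Y (\<pi> r)"
    by (rule block_function_of_locally_determined)
  then obtain \<Psi> where "\<forall>r\<in>Reg. \<forall>x. agree_within T r x \<longrightarrow>
      \<Psi> (window x (- int T) (2 * T + 1)) = future_edge Y (\<pi> r)"
    by blast
  moreover have "M < T"
    by (simp add: T_def)
  ultimately show thesis
    using that F_local by blast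
qed

lemma \<pi>_near_regular_point:
  assumes "M \<le> T" "x \<in> X" "r \<in> Reg" "agree_within T r (shift_seq i x)"
  shows "\<pi> r 0 = \<pi> x i"
proof -
  have "shift_seq i x \<in> X"
    using assms(2) shift_invariant_X by (simp add: shift_invariant_mem_iff)
  then have "\<pi> r 0 = \<pi> (shift_seq i x) 0"
    using assms(1,4) by (intro \<pi>_local[OF Reg_subset[OF assms(3)]]) (auto simp: agree_within_def)
  then show ?thesis
    using assms(2) by (simp add: \<pi>_shift_seq)
qed

lemma future_edges_consecutive:
  assumes F_local: "\<And>a b. a \<in> Reg \<Longrightarrow> b \<in> Reg \<Longrightarrow> agree_within (T - 1) a b \<Longrightarrow>
      future_set Y (\<pi> a) = future_set Y (\<pi> b)"
    and "0 < T" and r: "r \<in> Reg" "agree_within T r (shift_seq i x)"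
    and r': "r' \<in> Reg" "agree_within T r' (shift_seq (i + 1) x)"
  shows "snd (snd (future_edge Y (\<pi> r))) = fst (future_edge Y (\<pi> r'))"
proof -
  have "agree_within (T - 1) (shift_seq 1 r) r'"
    using r(2) r'(2) \<open>0 < T\<close> by (auto simp: agree_within_def ac_simps)
  then have "future_set Y (\<pi> (shift_seq 1 r)) = future_set Y (\<pi> r')"
    using F_local r(1) r'(1) shift_seq_regular_point by blast
  then show ?thesis
    using r(1) Reg_subset by (simp add: future_edge_def \<pi>_shift_seq)
qed

lemma future_cover_lift:
  assumes "right_closing X \<pi>" "regular_code X Y \<pi>"
  shows "\<exists>\<rho>. sliding_block_code X (future_cover_shift Y) \<rho> \<and> (\<forall>x\<in>X. label_map (\<rho> x) = \<pi> x)"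
proof -
  obtain T \<Psi> where "M < T"
    and F_local: "\<And>a b. a \<in> Reg \<Longrightarrow> b \<in> Reg \<Longrightarrow> agree_within (T - 1) a b \<Longrightarrow>
      future_set Y (\<pi> a) = future_set Y (\<pi> b)"
    and \<Psi>: "\<forall>r\<in>Reg. \<forall>x. agree_within T r x \<longrightarrow>
      \<Psi> (window x (- int T) (2 * T + 1)) = future_edge Y (\<pi> r)"
    using future_edge_block_function assms(1) by blast
  define \<rho> where "\<rho> x i = \<Psi> (window x (i - int T) (2 * T + 1))" for x i
  have \<rho>: "\<rho> x i = future_edge Y (\<pi> r)" if "r \<in> Reg" "agree_within T r (shift_seq i x)" for x i r
  proof -
    have "\<rho> x i = \<Psi> (window (shift_seq i x) (- int T) (2 * T + 1))"
      by (simp add: \<rho>_def window_shift_seq)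
    then show ?thesis
      using \<Psi> that by simp
  qed
  have label: "label_map (\<rho> x) = \<pi> x" if x: "x \<in> X" for x
  proof
    fix i
    obtain r where r: "r \<in> Reg" "agree_within T r (shift_seq i x)"
      using regular_point_near_shift assms(2) x by blast
    show "label_map (\<rho> x) i = \<pi> x i"
      using \<rho>[OF r] \<pi>_near_regular_point[OF _ x r] \<open>M < T\<close>
      by (simp add: label_map_def future_edge_def)
  qed
  have path: "\<rho> x \<in> future_cover_shift Y" if x: "x \<in> X" for x
    unfolding path_shift_def
  proof (intro CollectI allI conjI)
    fix i
    obtain r where r: "r \<in> Reg" "agree_within T r (shift_seq i x)"
      using regular_point_near_shift assms(2) x by blast
    obtain r' where r': "r' \<in> Reg" "agree_within T r' (shift_seq (i + 1) x)"
      using regular_point_near_shift assms(2) x by blast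
    show "\<rho> x i \<in> future_cover_edges Y"
      using \<rho>[OF r] future_edge_in_future_cover_edges[OF shift_invariant_Y] r(1) Reg_subset by simp
    show "snd (snd (\<rho> x i)) = fst (\<rho> x (i + 1))"
      using \<rho>[OF r] \<rho>[OF r'] future_edges_consecutive[OF F_local _ r r'] \<open>M < T\<close> by simp
  qed
  have "sliding_block_code X (future_cover_shift Y) \<rho>"
    unfolding sliding_block_code_def
    by (intro conjI ballI allI exI[of _ T] exI[of _ \<Psi>]) (simp_all add: path \<rho>_def)
  then show ?thesis
    using label by blast
qed

end

theorem proposition3p13:
  fixes X :: "(int \<Rightarrow> 'b::finite) set"
    and Y :: "(int \<Rightarrow> 'a::finite) set"
    and \<pi> :: "(int \<Rightarrow> 'b) \<Rightarrow> (int \<Rightarrow> 'a)"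
  assumes "is_sft X"
    and "is_sofic Y"
    and "factor_code X Y \<pi>"
    and "right_closing X \<pi>"
    and "regular_code X Y \<pi>"
  shows "\<exists>\<rho>. sliding_block_code X (future_cover_shift Y) \<rho> \<and>
             (\<forall>x\<in>X. label_map (\<rho> x) = \<pi> x)"
proof -
  obtain N and P :: "'b list set" where "X = {x. \<forall>i. window x i N \<in> P}"
    using assms(1) unfolding is_sft_def by blast
  moreover obtain M and \<Phi> :: "'b list \<Rightarrow> 'a"
    where "\<forall>x\<in>X. \<forall>i. \<pi> x i = \<Phi> (window x (i - int M) (2 * M + 1))"
    using assms(3) unfolding factor_code_def sliding_block_code_def by blast
  ultimately interpret sft_block_code X N P \<pi> M \<Phi>
    by unfold_locales
  have "Y = \<pi> ` X"
    using assms(3) unfolding factor_code_def by simp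
  then show ?thesis
    using future_cover_lift assms(4,5) by simp
qed

end
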